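(* Let $G$ be a graph and $\{\hat C,\hat I,\hat Q\}$ a partition of $V(G)$ (parts may be empty) such that: (1) $\hat C$ is a clique and $\hat I$ is an independent set; (2) $\hat Q$ is a clique or an independent set, and $|\hat Q|\ge2$; (3) every vertex of $\hat Q$ is adjacent to every vertex of $\hat C$ and to no vertex of $\hat I$; (4) if $\hat Q$ is a clique, every vertex of $\hat C$ has a neighbor in $\hat I$; (5) if $\hat Q$ is an independent set, every vertex of $\hat I$ has a non-neighbor in $\hat C$. Then $G$ is a split graph, and $\hat C$, $\hat I$, $\hat Q$ are respectively its always-clique set, always-independent set, and questioning set.
   Context: A split partition of a graph $G$ is an ordered pair $(C',I')$ of disjoint sets (possibly empty) with $C'\cup I'=V(G)$, $C'$ a clique and $I'$ an independent set; $G$ is a split graph if it has a split partition. The always-clique set of a split graph is the set of vertices lying in $C'$ for every split partition $(C',I')$; the always-independent set is the set of vertices lying in $I'$ for every split partition; the questioning set is the set of vertices $v$ for which there is a split partition with $v\in C'$ and a split partition with $v\in I'$. *)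

theory Defs
  imports Main
begin

text \<open>A (finite, simple) graph is given by a finite vertex set V and a symmetric,
irreflexive adjacency relation E (only its restriction to V matters).\<close>

definition graph :: "'a set \<Rightarrow> ('a \<Rightarrow> 'a \<Rightarrow> bool) \<Rightarrow> bool" where
  "graph V E \<longleftrightarrow> finite V \<and> (\<forall>u v. E u v \<longrightarrow> E v u) \<and> (\<forall>v. \<not> E v v)"

definition is_clique :: "('a \<Rightarrow> 'a \<Rightarrow> bool) \<Rightarrow> 'a set \<Rightarrow> bool" where
  "is_clique E S \<longleftrightarrow> (\<forall>u\<in>S. \<forall>v\<in>S. u \<noteq> v \<longrightarrow> E u v)"

definition is_independent :: "('a \<Rightarrow> 'a \<Rightarrow> bool) \<Rightarrow> 'a set \<Rightarrow> bool" where
  "is_independent E S \<longleftrightarrow> (\<forall>u\<in>S. \<forall>v\<in>S. \<not> E u v)"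

definition split_partition :: "'a set \<Rightarrow> ('a \<Rightarrow> 'a \<Rightarrow> bool) \<Rightarrow> 'a set \<Rightarrow> 'a set \<Rightarrow> bool" where
  "split_partition V E C I \<longleftrightarrow> C \<inter> I = {} \<and> C \<union> I = V \<and> is_clique E C \<and> is_independent E I"

definition split_graph :: "'a set \<Rightarrow> ('a \<Rightarrow> 'a \<Rightarrow> bool) \<Rightarrow> bool" where
  "split_graph V E \<longleftrightarrow> (\<exists>C I. split_partition V E C I)"

definition always_clique :: "'a set \<Rightarrow> ('a \<Rightarrow> 'a \<Rightarrow> bool) \<Rightarrow> 'a set" where
  "always_clique V E = {v \<in> V. \<forall>C I. split_partition V E C I \<longrightarrow> v \<in> C}"

definition always_independent :: "'a set \<Rightarrow> ('a \<Rightarrow> 'a \<Rightarrow> bool) \<Rightarrow> 'a set" where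
  "always_independent V E = {v \<in> V. \<forall>C I. split_partition V E C I \<longrightarrow> v \<in> I}"

definition questioning :: "'a set \<Rightarrow> ('a \<Rightarrow> 'a \<Rightarrow> bool) \<Rightarrow> 'a set" where
  "questioning V E = {v \<in> V. (\<exists>C I. split_partition V E C I \<and> v \<in> C) \<and>
                               (\<exists>C I. split_partition V E C I \<and> v \<in> I)}"

end

theory Submission
  imports Defs
begin

text \<open>In every split partition \<open>(C', I')\<close> the clique \<open>Q\<close> has a vertex in \<open>C'\<close>; being adjacent to
  all of \<open>C\<close> and to nothing in \<open>I\<close>, that vertex forces \<open>I \<subseteq> I'\<close>, and then the neighbours in \<open>I\<close>
  of the vertices of \<open>C\<close> force \<open>C \<subseteq> C'\<close>. Moving one vertex of \<open>Q\<close> to the independent side of the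
  split partition \<open>(C \<union> Q, I)\<close> shows that every vertex of \<open>Q\<close> can lie on either side. The case of
  an independent \<open>Q\<close> is the same statement for the complementary graph, in which split partitions
  \<open>(C', I')\<close> become \<open>(I', C')\<close>.\<close>

definition graph_complement :: "('a \<Rightarrow> 'a \<Rightarrow> bool) \<Rightarrow> 'a \<Rightarrow> 'a \<Rightarrow> bool" where
  "graph_complement E u v \<longleftrightarrow> u \<noteq> v \<and> \<not> E u v"

lemma graph_graph_complement: "graph V E \<Longrightarrow> graph V (graph_complement E)"
  unfolding graph_def graph_complement_def by blast

lemma is_clique_graph_complement_iff:
  "(\<forall>v. \<not> E v v) \<Longrightarrow> is_clique (graph_complement E) S \<longleftrightarrow> is_independent E S"
  unfolding is_clique_def is_independent_def graph_complement_def by metis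

lemma is_independent_graph_complement_iff:
  "is_independent (graph_complement E) S \<longleftrightarrow> is_clique E S"
  unfolding is_clique_def is_independent_def graph_complement_def by blast

lemma split_partition_graph_complement_iff:
  "(\<forall>v. \<not> E v v) \<Longrightarrow> split_partition V (graph_complement E) I C \<longleftrightarrow> split_partition V E C I"
  unfolding split_partition_def
  by (auto simp: is_clique_graph_complement_iff is_independent_graph_complement_iff)

lemma split_classes_graph_complement:
  assumes "\<forall>v. \<not> E v v"
  shows "split_graph V (graph_complement E) \<longleftrightarrow> split_graph V E"
    and "always_clique V (graph_complement E) = always_independent V E"
    and "always_independent V (graph_complement E) = always_clique V E"
    and "questioning V (graph_complement E) = questioning V E"
  using split_partition_graph_complement_iff[of E V, OF assms]
  unfolding split_graph_def always_clique_def always_independent_def questioning_def by blast+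

lemma split_partition_meets_clique:
  assumes "split_partition V E C' I'" and "is_clique E Q" and "Q \<subseteq> V"
    and "a \<in> Q" and "b \<in> Q" and "a \<noteq> b"
  obtains q where "q \<in> Q" and "q \<in> C'"
  using assms unfolding split_partition_def is_clique_def is_independent_def by blast

lemma split_classes_eqI:
  assumes "split_graph V E"
    and cover: "C \<union> I \<union> Q = V"
    and bounds: "\<And>C' I'. split_partition V E C' I' \<Longrightarrow> C \<subseteq> C' \<and> I \<subseteq> I'"
    and in_clique: "\<And>q. q \<in> Q \<Longrightarrow> \<exists>C' I'. split_partition V E C' I' \<and> q \<in> C'"
    and in_independent: "\<And>q. q \<in> Q \<Longrightarrow> \<exists>C' I'. split_partition V E C' I' \<and> q \<in> I'"
  shows "always_clique V E = C \<and> always_independent V E = I \<and> questioning V E = Q"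
proof -
  obtain C0 I0 where p0: "split_partition V E C0 I0"
    using assms(1) unfolding split_graph_def by blast
  have disjoint: "v \<notin> I'" if "split_partition V E C' I'" "v \<in> C'" for v C' I'
    using that unfolding split_partition_def by blast
  have not_always_clique: "v \<notin> always_clique V E" if "v \<in> I \<union> Q" for v
  proof -
    obtain C' I' where "split_partition V E C' I'" "v \<in> I'"
      using \<open>v \<in> I \<union> Q\<close> p0 bounds in_independent by blast
    then show ?thesis unfolding always_clique_def using disjoint by blast
  qed
  have not_always_independent: "v \<notin> always_independent V E" if "v \<in> C \<union> Q" for v
  proof -
    obtain C' I' where "split_partition V E C' I'" "v \<in> C'"
      using \<open>v \<in> C \<union> Q\<close> p0 bounds in_clique by blast
    then show ?thesis unfolding always_independent_def using disjoint by blast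
  qed
  have "always_clique V E = C"
    using cover bounds not_always_clique unfolding always_clique_def by blast
  moreover have "always_independent V E = I"
    using cover bounds not_always_independent unfolding always_independent_def by blast
  moreover have "questioning V E = Q"
    using cover bounds disjoint in_clique in_independent unfolding questioning_def by blast
  ultimately show ?thesis by blast
qed

context
  fixes V :: "'a set" and E :: "'a \<Rightarrow> 'a \<Rightarrow> bool" and C I Q :: "'a set"
  assumes graph: "graph V E"
    and cover: "C \<union> I \<union> Q = V"
    and disjoint: "C \<inter> I = {}" "C \<inter> Q = {}" "I \<inter> Q = {}"
    and C_clique: "is_clique E C" and I_independent: "is_independent E I"
    and Q_clique: "is_clique E Q"
    and Q_adjacency: "\<forall>q\<in>Q. (\<forall>c\<in>C. E q c) \<and> (\<forall>i\<in>I. \<not> E q i)"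
    and C_neighbours_in_I: "\<forall>c\<in>C. \<exists>i\<in>I. E c i"
begin

lemma adjacent_Q_C: "q \<in> Q \<Longrightarrow> c \<in> C \<Longrightarrow> E q c \<and> E c q"
  using Q_adjacency graph unfolding graph_def by blast

lemma nonadjacent_Q_I: "q \<in> Q \<Longrightarrow> i \<in> I \<Longrightarrow> \<not> E q i \<and> \<not> E i q"
  using Q_adjacency graph unfolding graph_def by blast

lemma split_partition_union_Q: "split_partition V E (C \<union> Q) I"
  using cover disjoint C_clique I_independent Q_clique adjacent_Q_C
  unfolding split_partition_def is_clique_def by blast

lemma split_partition_move_from_Q:
  assumes "q \<in> Q"
  shows "split_partition V E (C \<union> Q - {q}) (I \<union> {q})"
proof -
  have "is_clique E (C \<union> Q - {q})"
    using C_clique Q_clique adjacent_Q_C unfolding is_clique_def by blast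
  moreover have "is_independent E (I \<union> {q})"
    using I_independent nonadjacent_Q_I assms graph unfolding is_independent_def graph_def by blast
  ultimately show ?thesis
    using cover disjoint assms unfolding split_partition_def by blast
qed

lemma split_partition_bounds:
  assumes split: "split_partition V E C' I'" and two: "a \<in> Q" "b \<in> Q" "a \<noteq> b"
  shows "C \<subseteq> C' \<and> I \<subseteq> I'"
proof -
  have cover': "v \<in> C' \<or> v \<in> I'" if "v \<in> V" for v
    using split that unfolding split_partition_def by blast
  have clique': "E u v" if "u \<in> C'" "v \<in> C'" "u \<noteq> v" for u v
    using split that unfolding split_partition_def is_clique_def by blast
  have independent': "\<not> E u v" if "u \<in> I'" "v \<in> I'" for u v
    using split that unfolding split_partition_def is_independent_def by blast
  obtain q where q: "q \<in> Q" "q \<in> C'"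
    using split_partition_meets_clique[OF split Q_clique _ two] cover by blast
  have I_not_C': "i \<notin> C'" if i: "i \<in> I" for i
  proof
    assume "i \<in> C'"
    moreover have "q \<noteq> i" using q i disjoint by blast
    ultimately have "E q i" using clique' q by blast
    then show False using nonadjacent_Q_I q i by blast
  qed
  have I_sub: "I \<subseteq> I'" using cover cover' I_not_C' by blast
  moreover have "C \<subseteq> C'"
  proof
    fix c assume c: "c \<in> C"
    then obtain i where i: "i \<in> I" "E c i" using C_neighbours_in_I by blast
    have "c \<in> V" using c cover by blast
    moreover have "c \<notin> I'" using independent' i I_sub by blast
    ultimately show "c \<in> C'" using cover' by blast
  qed
  ultimately show ?thesis by blast
qed

lemma split_classes_of_clique_part:
  assumes "a \<in> Q" "b \<in> Q" "a \<noteq> b"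
  shows "split_graph V E \<and> always_clique V E = C \<and> always_independent V E = I
    \<and> questioning V E = Q"
proof -
  have "split_graph V E"
    using split_partition_union_Q unfolding split_graph_def by blast
  moreover have "always_clique V E = C \<and> always_independent V E = I \<and> questioning V E = Q"
  proof (rule split_classes_eqI[OF \<open>split_graph V E\<close> cover])
    show "C \<subseteq> C' \<and> I \<subseteq> I'" if "split_partition V E C' I'" for C' I'
      using split_partition_bounds[OF that assms] .
    show "\<exists>C' I'. split_partition V E C' I' \<and> q \<in> C'" if "q \<in> Q" for q
      using split_partition_union_Q that by blast
    show "\<exists>C' I'. split_partition V E C' I' \<and> q \<in> I'" if "q \<in> Q" for q
      using split_partition_move_from_Q[OF that] by blast
  qed
  ultimately show ?thesis by blast
qed

end

lemma split_classes_of_independent_part: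
  assumes "graph V E"
    and "C \<union> I \<union> Q = V" and "C \<inter> I = {}" and "C \<inter> Q = {}" and "I \<inter> Q = {}"
    and "is_clique E C" and "is_independent E I" and "is_independent E Q"
    and "\<forall>q\<in>Q. (\<forall>c\<in>C. E q c) \<and> (\<forall>i\<in>I. \<not> E q i)"
    and "\<forall>i\<in>I. \<exists>c\<in>C. \<not> E i c"
    and "a \<in> Q" and "b \<in> Q" and "a \<noteq> b"
  shows "split_graph V E \<and> always_clique V E = C \<and> always_independent V E = I
    \<and> questioning V E = Q"
proof -
  have irreflexive: "\<forall>v. \<not> E v v" using \<open>graph V E\<close> unfolding graph_def by blast
  have "split_graph V (graph_complement E) \<and> always_clique V (graph_complement E) = I
    \<and> always_independent V (graph_complement E) = C \<and> questioning V (graph_complement E) = Q"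
  proof (rule split_classes_of_clique_part[where E = "graph_complement E" and C = I and I = C])
    show "graph V (graph_complement E)" using \<open>graph V E\<close> by (rule graph_graph_complement)
    show "I \<union> C \<union> Q = V" "I \<inter> C = {}" "I \<inter> Q = {}" "C \<inter> Q = {}"
      using assms(2-5) by blast+
    show "is_clique (graph_complement E) I" "is_independent (graph_complement E) C"
      "is_clique (graph_complement E) Q"
      using assms(6-8) is_clique_graph_complement_iff[where E = E, OF irreflexive]
      by (simp_all add: is_independent_graph_complement_iff)
    show "\<forall>q\<in>Q. (\<forall>i\<in>I. graph_complement E q i) \<and> (\<forall>c\<in>C. \<not> graph_complement E q c)"
      using assms(4,5,9) unfolding graph_complement_def by blast
    show "\<forall>i\<in>I. \<exists>c\<in>C. graph_complement E i c"
      using assms(3,10) unfolding graph_complement_def by fastforce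
  qed (use assms(11-13) in blast)+
  then show ?thesis using split_classes_graph_complement[where E = E, OF irreflexive] by simp
qed

theorem lemma8p5:
  fixes V :: "'a set" and E :: "'a \<Rightarrow> 'a \<Rightarrow> bool" and C I Q :: "'a set"
  assumes "graph V E"
    and "C \<union> I \<union> Q = V" and "C \<inter> I = {}" and "C \<inter> Q = {}" and "I \<inter> Q = {}"
    and "is_clique E C" and "is_independent E I"
    and "is_clique E Q \<or> is_independent E Q" and "card Q \<ge> 2"
    and "\<forall>q\<in>Q. (\<forall>c\<in>C. E q c) \<and> (\<forall>i\<in>I. \<not> E q i)"
    and "is_clique E Q \<longrightarrow> (\<forall>c\<in>C. \<exists>i\<in>I. E c i)"
    and "is_independent E Q \<longrightarrow> (\<forall>i\<in>I. \<exists>c\<in>C. \<not> E i c)"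
  shows "split_graph V E \<and> always_clique V E = C \<and> always_independent V E = I
         \<and> questioning V E = Q"
proof -
  have "finite Q" and "\<not> card Q \<le> Suc 0"
    using \<open>card Q \<ge> 2\<close> card_gt_0_iff[of Q] by auto
  then obtain a b where two: "a \<in> Q" "b \<in> Q" "a \<noteq> b"
    using card_le_Suc0_iff_eq by blast
  from \<open>is_clique E Q \<or> is_independent E Q\<close> show ?thesis
  proof
    assume "is_clique E Q"
    then show ?thesis
      using split_classes_of_clique_part[OF assms(1-7) _ assms(10) _ two] assms(11) by blast
  next
    assume "is_independent E Q"
    then show ?thesis
      using split_classes_of_independent_part[OF assms(1-7) _ assms(10) _ two] assms(12) by blast
  qed
qed

end
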